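(* Let $\{\alpha_I\}_{I\in\mathcal{D}}$ be a dyadic Carleson sequence: $\alpha_I\ge0$ and there is $C_0$ with $\sum_{I\subset J,\,I\in\mathcal{D}}\alpha_I|I|\le C_0|J|$ for all $J\in\mathcal{D}$. Let $\Psi:(0,1]\to(0,\infty)$ be a decreasing function such that $s\mapsto s\Psi(s)$ is increasing and $\int_0^1\frac{ds}{s\Psi(s)}<\infty$. Then there is a constant $C$ (depending only on $\Psi$ and $C_0$) such that for every weight $w$ on $\mathbb{R}$ with $\mathbf{n}_\Psi(N_I^w)<\infty$ for all $I\in\mathcal{D}$, every $J\in\mathcal{D}$ and every $f\in L^2(w)$, \[ \sum_{I\in\mathcal{D},\,I\subset J}\mathbf{n}_\Psi(N_I^w)^{-1}\langle fw\rangle_I^2\,\alpha_I\,|I|\le C\int_Jf^2w\,dx, \] where in the summation the intervals $I$ on which $w\equiv0$ are skipped.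
   Context: $\mathcal{D}$ is the standard dyadic lattice of intervals in $\mathbb{R}$. A weight is a nonnegative locally integrable function; $\langle g\rangle_I=\frac1{|I|}\int_Ig$. $N_I^w(t)=\frac{1}{|I|}|\{x\in I:w(x)>t\}|$ and $\mathbf{n}_\Psi(N)=\int_0^\infty N(t)\Psi(N(t))\,dt$ (integrand $0$ where $N(t)=0$). *)

theory Defs
  imports "HOL-Analysis.Analysis"
begin

definition dyadic_interval :: "int \<Rightarrow> int \<Rightarrow> real set" where
  "dyadic_interval j k = {real_of_int k * 2 powr (- real_of_int j) ..< (real_of_int k + 1) * 2 powr (- real_of_int j)}"

definition dyadic_lattice :: "real set set" where
  "dyadic_lattice = {dyadic_interval j k | j k. True}"

definition len :: "real set \<Rightarrow> real" where
  "len I = measure lborel I"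

definition avg :: "(real \<Rightarrow> real) \<Rightarrow> real set \<Rightarrow> real" where
  "avg g I = (set_lebesgue_integral lborel I g) / len I"

definition distN :: "(real \<Rightarrow> real) \<Rightarrow> real set \<Rightarrow> real \<Rightarrow> real" where
  "distN w I t = measure lborel {x \<in> I. w x > t} / len I"

definition nPsi :: "(real \<Rightarrow> real) \<Rightarrow> (real \<Rightarrow> real) \<Rightarrow> ennreal" where
  "nPsi \<Psi> N = (\<integral>\<^sup>+ t \<in> {0<..}. ennreal (if N t = 0 then 0 else N t * \<Psi> (N t)) \<partial>lborel)"

definition carleson_seq :: "(real set \<Rightarrow> real) \<Rightarrow> real \<Rightarrow> bool" where
  "carleson_seq \<alpha> C0 \<longleftrightarrow> (\<forall>I\<in>dyadic_lattice. \<alpha> I \<ge> 0) \<and>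
     (\<forall>J\<in>dyadic_lattice.
        (\<Sum>\<^sub>\<infinity> I \<in> {I \<in> dyadic_lattice. I \<subseteq> J}. ennreal (\<alpha> I * len I)) \<le> ennreal (C0 * len J))"

definition is_weight :: "(real \<Rightarrow> real) \<Rightarrow> bool" where
  "is_weight w \<longleftrightarrow> w \<in> borel_measurable lborel \<and> (\<forall>x. w x \<ge> 0) \<and>
     (\<forall>K. compact K \<longrightarrow> set_integrable lborel K w)"

definition in_L2w :: "(real \<Rightarrow> real) \<Rightarrow> (real \<Rightarrow> real) \<Rightarrow> bool" where
  "in_L2w w f \<longleftrightarrow> f \<in> borel_measurable lborel \<and>
     (\<integral>\<^sup>+ x. ennreal ((f x)\<^sup>2 * w x) \<partial>lborel) < \<infinity>"

end

theory Submission
  imports Defs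
begin

(*
  Write mu(I) for the integral of w over I. The summand of I is beta(I) (<fw>_I / <w>_I)^2 with
  beta(I) = mu(I)^2 alpha_I / (|I| n_Psi(N_I)), so by the weighted Carleson embedding theorem, proved
  with the Bellman function 4 (F - f^2 / M), it suffices that beta is a Carleson sequence for the
  measure w dx. Young's inequality and the layer cake formula give
  mu(I)^2 / (|I| n_Psi(N_I)) \<le> |I| \<integral> phi(N_I(t)) dt with phi(s) = s / Psi(s), and since s Psi(s)
  increases, phi(s) \<le> 4 \<integral>_0^s dl / Psi(l). For every superlevel set E = {w > t} it thus remains to
  bound the sum of alpha_I |I| over the I \<subseteq> J with |I \<inter> E| > l |I| by C0 |J \<inter> E| / l, which follows
  by grouping these intervals under the maximal ones; integrating in l against 1 / Psi(l) and then in
  t yields the constant 4 C0 \<integral>_0^1 ds / (s Psi(s)).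
*)

lemma dyadic_interval_iff_floor: "x \<in> dyadic_interval j k \<longleftrightarrow> \<lfloor>x * 2 powr j\<rfloor> = k"
proof -
  have "0 < 2 powr (real_of_int j)" "2 powr (- real_of_int j) = 1 / 2 powr (real_of_int j)"
    by (simp_all add: powr_minus_divide)
  then have "x \<in> dyadic_interval j k \<longleftrightarrow> real_of_int k \<le> x * 2 powr j \<and> x * 2 powr j < real_of_int k + 1"
    unfolding dyadic_interval_def by (simp only: atLeastLessThan_iff) (simp add: field_simps)
  also have "\<dots> \<longleftrightarrow> \<lfloor>x * 2 powr j\<rfloor> = k"
    by linarith
  finally show ?thesis .
qed

lemma left_endpoint_in_dyadic_interval: "real_of_int k * 2 powr (- real_of_int j) \<in> dyadic_interval j k"
  unfolding dyadic_interval_def by simp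

lemma dyadic_interval_subset_atLeastAtMost:
  "dyadic_interval j k \<subseteq> {real_of_int k * 2 powr (- real_of_int j) .. (real_of_int k + 1) * 2 powr (- real_of_int j)}"
  unfolding dyadic_interval_def by auto

lemma emeasure_dyadic_interval: "emeasure lborel (dyadic_interval j k) = ennreal (2 powr (- real_of_int j))"
  unfolding dyadic_interval_def by (simp add: algebra_simps)

lemma len_dyadic_interval: "len (dyadic_interval j k) = 2 powr (- real_of_int j)"
  unfolding len_def dyadic_interval_def by (simp add: algebra_simps)

lemma dyadic_interval_borel [measurable]: "dyadic_interval j k \<in> sets borel"
  unfolding dyadic_interval_def by simp

lemma dyadic_lattice_iff: "I \<in> dyadic_lattice \<longleftrightarrow> (\<exists>j k. I = dyadic_interval j k)"
  unfolding dyadic_lattice_def by auto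

lemma dyadic_interval_in_lattice [simp]: "dyadic_interval j k \<in> dyadic_lattice"
  by (auto simp: dyadic_lattice_iff)

lemma
  assumes "I \<in> dyadic_lattice"
  shows dyadic_lattice_nonempty: "I \<noteq> {}"
    and dyadic_lattice_len_pos: "len I > 0"
    and dyadic_lattice_sets: "I \<in> sets lborel"
    and dyadic_lattice_fmeasurable: "I \<in> fmeasurable lborel"
  using assms left_endpoint_in_dyadic_interval
  by (auto simp: dyadic_lattice_iff len_dyadic_interval emeasure_dyadic_interval intro!: fmeasurableI)

lemma floor_mult_powr_coarser:
  assumes "j \<le> j'"
  shows "\<lfloor>x * 2 powr j\<rfloor> = \<lfloor>x * 2 powr j'\<rfloor> div 2 ^ nat (j' - j)"
proof -
  have "2 powr (real_of_int j') = 2 powr (real_of_int j + real (nat (j' - j)))"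
    using assms by simp
  also have "\<dots> = 2 powr (real_of_int j) * real_of_int (2 ^ nat (j' - j))"
    by (simp add: powr_add powr_realpow)
  finally have "x * 2 powr j = (x * 2 powr j') / real_of_int (2 ^ nat (j' - j))"
    by simp
  then show ?thesis
    using floor_divide_real_eq_div[of "2 ^ nat (j' - j)" "x * 2 powr j'"] by simp
qed

lemma dyadic_interval_subset_ancestor:
  assumes "j \<le> j'"
  shows "dyadic_interval j' k' \<subseteq> dyadic_interval j (k' div 2 ^ nat (j' - j))"
  using floor_mult_powr_coarser[OF assms] by (auto simp: dyadic_interval_iff_floor)

lemma dyadic_nested_or_disjoint:
  assumes "I \<in> dyadic_lattice" "I' \<in> dyadic_lattice"
  shows "I \<subseteq> I' \<or> I' \<subseteq> I \<or> I \<inter> I' = {}"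
proof -
  have nest: "dyadic_interval j' k' \<subseteq> dyadic_interval j k \<or> dyadic_interval j' k' \<inter> dyadic_interval j k = {}"
    if "j \<le> j'" for j j' k k'
  proof (cases "k = k' div 2 ^ nat (j' - j)")
    case True
    then show ?thesis using dyadic_interval_subset_ancestor[OF that] by auto
  next
    case False
    then show ?thesis
      using floor_mult_powr_coarser[OF that] by (auto simp: dyadic_interval_iff_floor)
  qed
  obtain j k j' k' where "I = dyadic_interval j k" "I' = dyadic_interval j' k'"
    using assms by (auto simp: dyadic_lattice_iff)
  then show ?thesis
    using nest[of j j' k' k] nest[of j' j k k'] by (cases "j \<le> j'") auto
qed

lemma dyadic_level_le_of_subset:
  assumes "dyadic_interval j' k' \<subseteq> dyadic_interval j k"
  shows "j \<le> j'"
proof -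
  have "emeasure lborel (dyadic_interval j' k') \<le> emeasure lborel (dyadic_interval j k)"
    using assms by (intro emeasure_mono) auto
  then show ?thesis
    by (simp add: emeasure_dyadic_interval)
qed

lemma dyadic_lattice_level_bound:
  assumes "finite F" "F \<subseteq> dyadic_lattice"
  obtains M where "\<And>j k. M \<le> j \<Longrightarrow> {I\<in>F. I \<subseteq> dyadic_interval j k} = {}"
proof -
  obtain lev where lev: "\<And>I. I \<in> F \<Longrightarrow> \<exists>k. I = dyadic_interval (lev I) k"
    using assms(2) by (metis dyadic_lattice_iff subsetD)
  have "j \<le> Max (lev ` F)" if "I \<in> F" "I \<subseteq> dyadic_interval j k" for I j k
  proof -
    have "j \<le> lev I"
      using that lev dyadic_level_le_of_subset by metis
    also have "lev I \<le> Max (lev ` F)"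
      using that(1) assms(1) by simp
    finally show ?thesis .
  qed
  then show ?thesis
    by (intro that[of "Max (lev ` F) + 1"]) fastforce
qed

lemma dyadic_downward_induct:
  assumes I: "I \<in> dyadic_lattice"
    and fine: "\<And>j k. M \<le> j \<Longrightarrow> P (dyadic_interval j k)"
    and parent: "\<And>j k. P (dyadic_interval (j+1) (2*k)) \<Longrightarrow> P (dyadic_interval (j+1) (2*k+1))
      \<Longrightarrow> P (dyadic_interval j k)"
  shows "P I"
proof -
  have "P (dyadic_interval j k)" if "j \<le> M" for j k
    using that
  proof (induction j arbitrary: k rule: int_le_induct)
    case base
    then show ?case using fine by simp
  next
    case (step i)
    then show ?case
      using parent[of "i - 1" k] by simp
  qed
  moreover obtain j k where "I = dyadic_interval j k"
    using I by (auto simp: dyadic_lattice_iff)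
  ultimately show ?thesis
    using fine by (cases "M \<le> j") auto
qed

lemma dyadic_children:
  shows "dyadic_interval j k = dyadic_interval (j+1) (2*k) \<union> dyadic_interval (j+1) (2*k+1)"
    and "dyadic_interval (j+1) (2*k) \<inter> dyadic_interval (j+1) (2*k+1) = {}"
  using floor_mult_powr_coarser[of j "j+1"] by (auto simp: dyadic_interval_iff_floor)

lemma dyadic_subset_cases:
  assumes "dyadic_interval j' k' \<subseteq> dyadic_interval j k"
  shows "j' = j \<and> k' = k \<or> dyadic_interval j' k' \<subseteq> dyadic_interval (j+1) (2*k)
        \<or> dyadic_interval j' k' \<subseteq> dyadic_interval (j+1) (2*k+1)"
proof -
  define x where "x = real_of_int k' * 2 powr (- real_of_int j')"
  have x': "x \<in> dyadic_interval j' k'"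
    unfolding x_def by (rule left_endpoint_in_dyadic_interval)
  then have x: "x \<in> dyadic_interval j k"
    using assms by auto
  show ?thesis
  proof (cases "j' = j")
    case True
    then show ?thesis using x x' by (auto simp: dyadic_interval_iff_floor)
  next
    case False
    then have jj': "j + 1 \<le> j'"
      using dyadic_level_le_of_subset[OF assms] by simp
    define k'' where "k'' = \<lfloor>x * 2 powr (j+1)\<rfloor>"
    have "k'' div 2 = k"
      using x floor_mult_powr_coarser[of j "j+1" x] by (simp add: dyadic_interval_iff_floor k''_def)
    then have "k'' = 2*k \<or> k'' = 2*k+1"
      by auto
    moreover have "dyadic_interval j' k' \<subseteq> dyadic_interval (j+1) k''"
      using dyadic_interval_subset_ancestor[OF jj', of k'] x' floor_mult_powr_coarser[OF jj', of x]
      by (simp add: dyadic_interval_iff_floor k''_def)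
    ultimately show ?thesis
      by auto
  qed
qed

lemma sum_dyadic_subsets_split:
  fixes h :: "real set \<Rightarrow> 'b::comm_monoid_add"
  assumes F: "finite F" "F \<subseteq> dyadic_lattice"
  shows "(\<Sum>I\<in>{I\<in>F. I \<subseteq> dyadic_interval j k}. h I) =
     (if dyadic_interval j k \<in> F then h (dyadic_interval j k) else 0)
     + (\<Sum>I\<in>{I\<in>F. I \<subseteq> dyadic_interval (j+1) (2*k)}. h I)
     + (\<Sum>I\<in>{I\<in>F. I \<subseteq> dyadic_interval (j+1) (2*k+1)}. h I)"
proof -
  let ?I = "dyadic_interval j k" and ?L = "dyadic_interval (j+1) (2*k)"
    and ?R = "dyadic_interval (j+1) (2*k+1)"
  have ch: "?I = ?L \<union> ?R" "?L \<inter> ?R = {}"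
    by (rule dyadic_children)+
  have ne: "?L \<noteq> {}" "?R \<noteq> {}" "I \<noteq> {}" if "I \<in> F" for I
    using that F dyadic_lattice_nonempty by auto
  have split: "{I\<in>F. I \<subseteq> ?I} = ({?I} \<inter> F) \<union> ({I\<in>F. I \<subseteq> ?L} \<union> {I\<in>F. I \<subseteq> ?R})"
  proof (intro equalityI subsetI)
    fix I assume I: "I \<in> {I\<in>F. I \<subseteq> ?I}"
    then have "I \<in> dyadic_lattice"
      using F by blast
    then obtain j' k' where "I = dyadic_interval j' k'"
      by (auto simp: dyadic_lattice_iff)
    then show "I \<in> ({?I} \<inter> F) \<union> ({I\<in>F. I \<subseteq> ?L} \<union> {I\<in>F. I \<subseteq> ?R})"
      using I dyadic_subset_cases[of j' k' j k] by auto
  qed (use ch in auto)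
  have disj: "({?I} \<inter> F) \<inter> ({I\<in>F. I \<subseteq> ?L} \<union> {I\<in>F. I \<subseteq> ?R}) = {}"
    "{I\<in>F. I \<subseteq> ?L} \<inter> {I\<in>F. I \<subseteq> ?R} = {}"
    using ch ne by blast+
  have "(\<Sum>I\<in>{I\<in>F. I \<subseteq> ?I}. h I)
      = (\<Sum>I\<in>{?I} \<inter> F. h I) + ((\<Sum>I\<in>{I\<in>F. I \<subseteq> ?L}. h I) + (\<Sum>I\<in>{I\<in>F. I \<subseteq> ?R}. h I))"
    unfolding split using F disj by (simp add: sum.union_disjoint)
  then show ?thesis
    by (simp add: add.assoc)
qed

definition dyadic_additive :: "(real set \<Rightarrow> real) \<Rightarrow> bool" where
  "dyadic_additive \<mu> \<longleftrightarrow> (\<forall>j k. \<mu> (dyadic_interval j k) =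
     \<mu> (dyadic_interval (j+1) (2*k)) + \<mu> (dyadic_interval (j+1) (2*k+1)))"

lemma dyadic_additive_set_integral:
  fixes g :: "real \<Rightarrow> real"
  assumes "\<And>I. I \<in> dyadic_lattice \<Longrightarrow> set_integrable lborel I g"
  shows "dyadic_additive (\<lambda>I. set_lebesgue_integral lborel I g)"
  unfolding dyadic_additive_def
proof (intro allI)
  fix j k
  show "set_lebesgue_integral lborel (dyadic_interval j k) g =
    set_lebesgue_integral lborel (dyadic_interval (j+1) (2*k)) g
    + set_lebesgue_integral lborel (dyadic_interval (j+1) (2*k+1)) g"
    by (subst dyadic_children(1)[of j k]) (intro set_integral_Un dyadic_children(2) assms; simp)
qed

lemma power2_add_divide_le:
  fixes a b D E :: real
  assumes "D \<ge> 0" "E \<ge> 0" "D = 0 \<Longrightarrow> a = 0" "E = 0 \<Longrightarrow> b = 0"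
  shows "(a + b)^2 / (D + E) \<le> a^2 / D + b^2 / E"
proof (cases "D = 0 \<or> E = 0")
  case True
  then show ?thesis using assms by auto
next
  case False
  then have D: "D > 0" and E: "E > 0"
    using assms by auto
  have "(a + b)^2 * (D * E) \<le> (a^2 * E + b^2 * D) * (D + E)"
    using zero_le_power2[of "a * E - b * D"] by (simp add: power2_eq_square algebra_simps)
  then have "(a + b)^2 / (D + E) \<le> (a^2 * E + b^2 * D) / (D * E)"
    using D E by (simp add: divide_simps mult.commute)
  also have "\<dots> = a^2 / D + b^2 / E"
    using D E by (simp add: field_simps)
  finally show ?thesis .
qed

definition carleson_bellman :: "real \<Rightarrow> real \<Rightarrow> real \<Rightarrow> real" where
  "carleson_bellman F f M = 4 * (F - f^2 / M)"

lemma carleson_bellman_nonneg: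
  assumes "f^2 \<le> F * m" "0 \<le> F" "0 \<le> m" "m \<le> M"
  shows "0 \<le> carleson_bellman F f M"
proof (cases "m = 0")
  case True
  then show ?thesis
    using assms by (simp add: carleson_bellman_def)
next
  case False
  then have "f^2 / M \<le> f^2 / m"
    using assms by (intro divide_left_mono) auto
  also have "\<dots> \<le> F"
    using assms False by (simp add: divide_simps)
  finally show ?thesis
    by (simp add: carleson_bellman_def)
qed

lemma carleson_bellman_le: "0 \<le> M \<Longrightarrow> carleson_bellman F f M \<le> 4 * F"
  by (simp add: carleson_bellman_def)

text \<open>The main inequality of the Bellman function: splitting an interval into its children
  pays for the term of the parent, provided the Carleson budget of the parent is not exceeded.\<close>
lemma carleson_bellman_main_inequality:
  fixes FL FR fL fR mL mR SL SR b :: real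
  assumes nonneg: "0 \<le> mL" "0 \<le> mR" "0 \<le> SL" "0 \<le> SR" "0 \<le> b"
    and zero: "mL = 0 \<Longrightarrow> fL = 0" "mR = 0 \<Longrightarrow> fR = 0"
    and budget: "b + SL + SR \<le> mL + mR"
  shows "b * ((fL + fR) / (mL + mR))^2 + carleson_bellman FL fL (mL + SL) + carleson_bellman FR fR (mR + SR)
    \<le> carleson_bellman (FL + FR) (fL + fR) (mL + mR + (b + SL + SR))"
proof -
  define m D where "m = mL + mR" and "D = mL + SL + (mR + SR)"
  define f where "f = fL + fR"
  have split: "f^2 / D \<le> fL^2 / (mL + SL) + fR^2 / (mR + SR)"
    unfolding f_def D_def using nonneg zero by (intro power2_add_divide_le) auto
  have jump: "b * (f / m)^2 + 4 * f^2 / (D + b) \<le> 4 * f^2 / D"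
  proof (cases "m = 0")
    case True
    then show ?thesis using nonneg zero by (simp add: m_def f_def)
  next
    case False
    then have m: "m > 0" and Dm: "m \<le> D" and D: "D > 0" and Db: "D + b \<le> 2 * m"
      using nonneg budget by (auto simp: m_def D_def)
    have "D * (D + b) \<le> 4 * m^2"
      using mult_mono[of D "2 * m" "D + b" "2 * m"] Db nonneg D by (simp add: power2_eq_square)
    have "b * (f / m)^2 = 4 * f^2 * b / (4 * m^2)"
      using m by (simp add: field_simps power2_eq_square)
    also have "\<dots> \<le> 4 * f^2 * b / (D * (D + b))"
      using \<open>D * (D + b) \<le> 4 * m^2\<close> m D nonneg by (intro divide_left_mono) auto
    also have "\<dots> = 4 * f^2 / D - 4 * f^2 / (D + b)"
      using D nonneg by (simp add: field_simps)
    finally show ?thesis by simp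
  qed
  have "b * (f / m)^2 + carleson_bellman FL fL (mL + SL) + carleson_bellman FR fR (mR + SR)
      \<le> b * (f / m)^2 + 4 * (FL + FR) - 4 * f^2 / D"
    using split by (simp add: carleson_bellman_def algebra_simps)
  also have "\<dots> \<le> 4 * (FL + FR) - 4 * f^2 / (D + b)"
    using jump by simp
  finally show ?thesis
    by (simp add: carleson_bellman_def m_def D_def f_def algebra_simps)
qed

text \<open>The Bellman function argument: the sum over the intervals of F below I is bounded by
  the Bellman function evaluated at I, by downward induction on the level of I; intervals
  below the finest level of F carry no terms.\<close>
lemma dyadic_carleson_embedding:
  fixes \<mu> f \<Phi> \<beta> :: "real set \<Rightarrow> real" and F :: "real set set"
  assumes F: "finite F" "F \<subseteq> dyadic_lattice"
    and additive: "dyadic_additive \<mu>" "dyadic_additive f" "dyadic_additive \<Phi>"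
    and nonneg: "\<And>I. I \<in> dyadic_lattice \<Longrightarrow> 0 \<le> \<mu> I" "\<And>I. I \<in> dyadic_lattice \<Longrightarrow> 0 \<le> \<Phi> I"
    and cauchy_schwarz: "\<And>I. I \<in> dyadic_lattice \<Longrightarrow> (f I)^2 \<le> \<Phi> I * \<mu> I"
    and \<beta>_nonneg: "\<And>I. I \<in> F \<Longrightarrow> 0 \<le> \<beta> I"
    and carleson: "\<And>I. I \<in> dyadic_lattice \<Longrightarrow> (\<Sum>I'\<in>{I'\<in>F. I' \<subseteq> I}. \<beta> I') \<le> \<mu> I"
    and J: "J \<in> dyadic_lattice"
  shows "(\<Sum>I\<in>{I\<in>F. I \<subseteq> J}. \<beta> I * (f I / \<mu> I)^2) \<le> 4 * \<Phi> J"
proof -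
  define S where "S I = (\<Sum>I'\<in>{I'\<in>F. I' \<subseteq> I}. \<beta> I')" for I
  define T where "T I = (\<Sum>I'\<in>{I'\<in>F. I' \<subseteq> I}. \<beta> I' * (f I' / \<mu> I')^2)" for I
  define G where "G I = carleson_bellman (\<Phi> I) (f I) (\<mu> I + S I)" for I
  have S_nonneg: "0 \<le> S I" for I
    unfolding S_def using \<beta>_nonneg by (intro sum_nonneg) auto
  have G_nonneg: "0 \<le> G I" if "I \<in> dyadic_lattice" for I
    unfolding G_def using that nonneg cauchy_schwarz S_nonneg
    by (intro carleson_bellman_nonneg[where m = "\<mu> I"]) auto
  have parent: "T (dyadic_interval j k) \<le> G (dyadic_interval j k)"
    if IH: "T (dyadic_interval (j+1) (2*k)) \<le> G (dyadic_interval (j+1) (2*k))"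
      "T (dyadic_interval (j+1) (2*k+1)) \<le> G (dyadic_interval (j+1) (2*k+1))" for j k
  proof -
    let ?I = "dyadic_interval j k" and ?L = "dyadic_interval (j+1) (2*k)"
      and ?R = "dyadic_interval (j+1) (2*k+1)"
    define b where "b = (if ?I \<in> F then \<beta> ?I else 0)"
    have "T ?I = b * (f ?I / \<mu> ?I)^2 + T ?L + T ?R"
      unfolding T_def b_def
      using sum_dyadic_subsets_split[OF F, of "\<lambda>I. \<beta> I * (f I / \<mu> I)^2" j k] by simp
    moreover have "S ?I = b + S ?L + S ?R"
      unfolding S_def b_def using sum_dyadic_subsets_split[OF F, of \<beta> j k] by simp
    moreover have additive_I: "\<mu> ?I = \<mu> ?L + \<mu> ?R" "f ?I = f ?L + f ?R" "\<Phi> ?I = \<Phi> ?L + \<Phi> ?R"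
      using additive unfolding dyadic_additive_def by blast+
    ultimately have T_I: "T ?I = b * ((f ?L + f ?R) / (\<mu> ?L + \<mu> ?R))^2 + T ?L + T ?R"
      and G_I: "G ?I = carleson_bellman (\<Phi> ?L + \<Phi> ?R) (f ?L + f ?R) (\<mu> ?L + \<mu> ?R + (b + S ?L + S ?R))"
      by (simp_all add: G_def add.assoc)
    have zero: "f I = 0" if "I \<in> dyadic_lattice" "\<mu> I = 0" for I
      using cauchy_schwarz[OF that(1)] that(2) by simp
    have "b + S ?L + S ?R \<le> \<mu> ?L + \<mu> ?R"
      using carleson[of ?I] \<open>S ?I = b + S ?L + S ?R\<close> additive_I by (simp add: S_def)
    then have "b * ((f ?L + f ?R) / (\<mu> ?L + \<mu> ?R))^2 + G ?L + G ?R \<le> G ?I"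
      unfolding G_I unfolding G_def using nonneg S_nonneg zero \<beta>_nonneg
      by (intro carleson_bellman_main_inequality) (simp_all add: b_def)
    then show ?thesis
      using T_I IH by simp
  qed
  obtain M where M: "\<And>j k. M \<le> j \<Longrightarrow> {I\<in>F. I \<subseteq> dyadic_interval j k} = {}"
    using dyadic_lattice_level_bound[OF F] by blast
  have "T J \<le> G J"
    using J
  proof (rule dyadic_downward_induct)
    fix j k :: int assume "M \<le> j"
    then have "T (dyadic_interval j k) = 0"
      unfolding T_def M[OF \<open>M \<le> j\<close>] by (simp only: sum.empty)
    then show "T (dyadic_interval j k) \<le> G (dyadic_interval j k)"
      using G_nonneg[of "dyadic_interval j k"] by simp
  qed (rule parent)
  also have "\<dots> \<le> 4 * \<Phi> J"
    unfolding G_def using nonneg S_nonneg J by (intro carleson_bellman_le add_nonneg_nonneg)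
  finally show ?thesis
    by (simp add: T_def)
qed

lemma
  assumes "is_weight w"
  shows weight_borel_measurable: "w \<in> borel_measurable borel"
    and weight_nonneg: "0 \<le> w x"
  using assms by (auto simp: is_weight_def)

lemma L2w_borel_measurable: "in_L2w w f \<Longrightarrow> f \<in> borel_measurable borel"
  by (simp add: in_L2w_def)

lemma set_integrable_weight:
  assumes "is_weight w" "I \<in> dyadic_lattice"
  shows "set_integrable lborel I w"
proof -
  obtain j k where I: "I = dyadic_interval j k"
    using assms(2) by (auto simp: dyadic_lattice_iff)
  have "set_integrable lborel
      {real_of_int k * 2 powr (- real_of_int j) .. (real_of_int k + 1) * 2 powr (- real_of_int j)} w"
    using assms(1) unfolding is_weight_def by auto
  then show ?thesis
    unfolding I by (rule set_integrable_subset) (auto simp: dyadic_interval_subset_atLeastAtMost)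
qed

lemma integrable_L2w:
  assumes "is_weight w" "in_L2w w f"
  shows "integrable lborel (\<lambda>x. (f x)^2 * w x)"
proof (rule integrableI_nonneg)
  show "(\<lambda>x. (f x)^2 * w x) \<in> borel_measurable lborel"
    using weight_borel_measurable[OF assms(1)] L2w_borel_measurable[OF assms(2)] by measurable
  show "AE x in lborel. 0 \<le> (f x)^2 * w x"
    using weight_nonneg[OF assms(1)] by simp
  show "(\<integral>\<^sup>+ x. ennreal ((f x)^2 * w x) \<partial>lborel) < \<infinity>"
    using assms(2) unfolding in_L2w_def by simp
qed

lemma set_integrable_L2w:
  assumes "is_weight w" "in_L2w w f" "I \<in> sets lborel"
  shows "set_integrable lborel I (\<lambda>x. (f x)^2 * w x)"
  unfolding set_integrable_def using integrable_L2w[OF assms(1,2)] assms(3)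
  by (rule integrable_mult_indicator[rotated])

text \<open>Local integrability of f w comes from the pointwise bound |f| w \<le> (f^2 + 1) w.\<close>
lemma set_integrable_L2w_mult_weight:
  assumes w: "is_weight w" and f: "in_L2w w f" and I: "I \<in> dyadic_lattice"
  shows "set_integrable lborel I (\<lambda>x. f x * w x)"
proof (rule set_integrable_bound)
  have I_sets: "I \<in> sets lborel"
    using I by (rule dyadic_lattice_sets)
  show "set_integrable lborel I (\<lambda>x. (f x)^2 * w x + w x)"
    using set_integrable_L2w[OF w f I_sets] set_integrable_weight[OF w I] by (rule set_integral_add(1))
  show "set_borel_measurable lborel I (\<lambda>x. f x * w x)"
    unfolding set_borel_measurable_def
    using weight_borel_measurable[OF w] L2w_borel_measurable[OF f] I_sets by measurable
  have "\<bar>f x\<bar> \<le> (f x)^2 + 1" for x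
    using zero_le_power2[of "\<bar>f x\<bar> - 1"] by (simp add: power2_eq_square algebra_simps)
  then have "\<bar>f x\<bar> * w x \<le> ((f x)^2 + 1) * w x" for x
    using weight_nonneg[OF w, of x] by (intro mult_right_mono)
  then show "AE x\<in>I in lborel. norm (f x * w x) \<le> norm ((f x)^2 * w x + w x)"
    using weight_nonneg[OF w] by (simp add: abs_mult distrib_right)
qed

lemma set_integral_nonneg:
  fixes g :: "real \<Rightarrow> real"
  assumes "\<And>x. 0 \<le> g x"
  shows "0 \<le> set_lebesgue_integral lborel I g"
  unfolding set_lebesgue_integral_def using assms
  by (intro Bochner_Integration.integral_nonneg) (simp add: indicator_def)

lemma square_le_of_quadratic_nonneg:
  fixes P A M :: real
  assumes quadratic: "\<And>c. 0 \<le> P - 2 * c * A + c^2 * M" and "0 \<le> M"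
  shows "A^2 \<le> P * M"
proof (cases "M = 0")
  case True
  have "A = 0"
  proof (rule ccontr)
    assume "A \<noteq> 0"
    then show False
      using quadratic[of "(P + 1) / (2 * A)"] True by simp
  qed
  then show ?thesis
    using True by simp
next
  case False
  then have M: "M > 0"
    using assms(2) by simp
  have "0 \<le> P - A^2 / M"
    using quadratic[of "A / M"] M by (simp add: power2_eq_square field_simps)
  then show ?thesis
    using M by (simp add: divide_simps)
qed

lemma weighted_cauchy_schwarz:
  assumes w: "is_weight w" and f: "in_L2w w f" and I: "I \<in> dyadic_lattice"
  shows "(set_lebesgue_integral lborel I (\<lambda>x. f x * w x))^2
    \<le> set_lebesgue_integral lborel I (\<lambda>x. (f x)^2 * w x) * set_lebesgue_integral lborel I w"
proof (rule square_le_of_quadratic_nonneg)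
  show "0 \<le> set_lebesgue_integral lborel I w"
    using weight_nonneg[OF w] by (rule set_integral_nonneg)
  fix c :: real
  have I_sets: "I \<in> sets lborel"
    using I by (rule dyadic_lattice_sets)
  have int: "set_integrable lborel I (\<lambda>x. (f x)^2 * w x)"
    "set_integrable lborel I (\<lambda>x. (2 * c) * (f x * w x))" "set_integrable lborel I (\<lambda>x. c^2 * w x)"
    using set_integrable_L2w[OF w f I_sets] set_integrable_L2w_mult_weight[OF w f I]
      set_integrable_weight[OF w I] by (auto intro: set_integrable_mult_right)
  have "0 \<le> set_lebesgue_integral lborel I (\<lambda>x. (f x - c)^2 * w x)"
    using weight_nonneg[OF w] by (intro set_integral_nonneg) simp
  also have "(\<lambda>x. (f x - c)^2 * w x) = (\<lambda>x. (f x)^2 * w x - (2 * c) * (f x * w x) + c^2 * w x)"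
    by (auto simp: power2_eq_square algebra_simps)
  also have "set_lebesgue_integral lborel I \<dots> = set_lebesgue_integral lborel I (\<lambda>x. (f x)^2 * w x)
      - set_lebesgue_integral lborel I (\<lambda>x. (2 * c) * (f x * w x)) + set_lebesgue_integral lborel I (\<lambda>x. c^2 * w x)"
    by (simp only: set_integral_add(2)[OF set_integral_diff(1)[OF int(1,2)] int(3)] set_integral_diff(2)[OF int(1,2)])
  finally show "0 \<le> set_lebesgue_integral lborel I (\<lambda>x. (f x)^2 * w x)
      - 2 * c * set_lebesgue_integral lborel I (\<lambda>x. f x * w x) + c^2 * set_lebesgue_integral lborel I w"
    by simp
qed

lemma weighted_carleson_embedding:
  assumes w: "is_weight w" and f: "in_L2w w f"
    and F: "finite F" "F \<subseteq> dyadic_lattice" and \<beta>_nonneg: "\<And>I. I \<in> F \<Longrightarrow> 0 \<le> \<beta> I"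
    and carleson: "\<And>I. I \<in> dyadic_lattice \<Longrightarrow>
      (\<Sum>I'\<in>{I'\<in>F. I' \<subseteq> I}. \<beta> I') \<le> set_lebesgue_integral lborel I w"
    and J: "J \<in> dyadic_lattice"
  shows "(\<Sum>I\<in>{I\<in>F. I \<subseteq> J}. \<beta> I *
      (set_lebesgue_integral lborel I (\<lambda>x. f x * w x) / set_lebesgue_integral lborel I w)^2)
    \<le> 4 * set_lebesgue_integral lborel J (\<lambda>x. (f x)^2 * w x)"
  using F
proof (rule dyadic_carleson_embedding)
  show "dyadic_additive (\<lambda>I. set_lebesgue_integral lborel I w)"
    "dyadic_additive (\<lambda>I. set_lebesgue_integral lborel I (\<lambda>x. f x * w x))"
    "dyadic_additive (\<lambda>I. set_lebesgue_integral lborel I (\<lambda>x. (f x)^2 * w x))"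
    using set_integrable_weight[OF w] set_integrable_L2w_mult_weight[OF w f]
      set_integrable_L2w[OF w f dyadic_lattice_sets]
    by (auto intro: dyadic_additive_set_integral)
  show "0 \<le> set_lebesgue_integral lborel I w" "0 \<le> set_lebesgue_integral lborel I (\<lambda>x. (f x)^2 * w x)" for I
    using weight_nonneg[OF w] by (auto intro: set_integral_nonneg)
  show "(set_lebesgue_integral lborel I (\<lambda>x. f x * w x))^2
      \<le> set_lebesgue_integral lborel I (\<lambda>x. (f x)^2 * w x) * set_lebesgue_integral lborel I w"
    if "I \<in> dyadic_lattice" for I
    using w f that by (rule weighted_cauchy_schwarz)
qed (fact \<beta>_nonneg carleson J)+

lemma borel_measurable_antimono:
  fixes h :: "real \<Rightarrow> real"
  assumes "antimono h"
  shows "h \<in> borel_measurable borel"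
proof -
  have "(\<lambda>x. - h x) \<in> borel_measurable borel"
    using assms by (intro borel_measurable_mono) (auto simp: mono_def antimono_def)
  then have "(\<lambda>x. - (- h x)) \<in> borel_measurable borel"
    by measurable
  then show ?thesis
    by simp
qed

lemma layer_cake_formula:
  fixes w :: "real \<Rightarrow> real"
  assumes [measurable]: "w \<in> borel_measurable borel" "A \<in> sets borel"
    and nonneg: "\<And>x. 0 \<le> w x"
  shows "(\<integral>\<^sup>+ t\<in>{0<..}. emeasure lborel {x\<in>A. w x > t} \<partial>lborel) = (\<integral>\<^sup>+ x\<in>A. ennreal (w x) \<partial>lborel)"
proof -
  define H where "H x t = (indicator {p. fst p \<in> A \<and> 0 < snd p \<and> snd p < w (fst p)} (x, t) :: ennreal)"
    for x t :: real
  have "case_prod H \<in> borel_measurable (lborel \<Otimes>\<^sub>M lborel)"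
    unfolding H_def by measurable
  then have "(\<integral>\<^sup>+ t. (\<integral>\<^sup>+ x. H x t \<partial>lborel) \<partial>lborel) = (\<integral>\<^sup>+ x. (\<integral>\<^sup>+ t. H x t \<partial>lborel) \<partial>lborel)"
    by (rule lborel_pair.Fubini')
  moreover have "(\<integral>\<^sup>+ x. H x t \<partial>lborel) = emeasure lborel {x\<in>A. w x > t} * indicator {0<..} t" for t
  proof -
    have "(\<lambda>x. H x t) = (\<lambda>x. indicator {0<..} t * indicator {x\<in>A. w x > t} x)"
      by (auto simp: H_def indicator_def fun_eq_iff)
    then show ?thesis
      by (simp add: nn_integral_cmult_indicator mult.commute)
  qed
  moreover have "(\<integral>\<^sup>+ t. H x t \<partial>lborel) = ennreal (w x) * indicator A x" for x
  proof -
    have "(\<lambda>t. H x t) = (\<lambda>t. indicator A x * indicator {0<..<w x} t)"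
      by (auto simp: H_def indicator_def fun_eq_iff)
    then show ?thesis
      using nonneg[of x] by (simp add: nn_integral_cmult_indicator mult.commute)
  qed
  ultimately show ?thesis
    by simp
qed

lemma set_integral_weight_layer_cake:
  assumes w: "is_weight w" and I: "I \<in> dyadic_lattice"
  shows "(\<integral>\<^sup>+ t\<in>{0<..}. emeasure lborel {x\<in>I. w x > t} \<partial>lborel) = ennreal (set_lebesgue_integral lborel I w)"
proof -
  \<comment> \<open>w is only locally integrable, so it is cut off to I before comparing the integrals\<close>
  have "(\<integral>\<^sup>+ x\<in>I. ennreal (w x) \<partial>lborel) = (\<integral>\<^sup>+ x\<in>I. ennreal (indicator I x * w x) \<partial>lborel)"
    by (intro nn_integral_cong) (auto simp: indicator_def)
  also have "\<dots> = ennreal (set_lebesgue_integral lborel I (\<lambda>x. indicator I x * w x))"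
    using set_integrable_weight[OF w I] weight_nonneg[OF w] dyadic_lattice_sets[OF I]
    by (intro nn_set_integral_eq_set_integral) (auto simp: set_integrable_def)
  also have "set_lebesgue_integral lborel I (\<lambda>x. indicator I x * w x) = set_lebesgue_integral lborel I w"
    unfolding set_lebesgue_integral_def
    by (intro Bochner_Integration.integral_cong) (auto simp: indicator_def)
  finally show ?thesis
    using weight_borel_measurable[OF w] weight_nonneg[OF w] dyadic_lattice_sets[OF I]
    by (subst layer_cake_formula) auto
qed

context
  fixes w :: "real \<Rightarrow> real" and I :: "real set"
  assumes w: "is_weight w" and I: "I \<in> dyadic_lattice"
begin

lemma emeasure_superlevel_distN:
  "emeasure lborel {x\<in>I. w x > t} = ennreal (len I * distN w I t)"
proof -
  have [measurable]: "w \<in> borel_measurable borel" "I \<in> sets borel"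
    using weight_borel_measurable[OF w] dyadic_lattice_sets[OF I] by auto
  have "{x\<in>I. w x > t} \<in> fmeasurable lborel"
    by (rule fmeasurableI2[OF dyadic_lattice_fmeasurable[OF I]]) auto
  then show ?thesis
    unfolding distN_def using dyadic_lattice_len_pos[OF I] by (simp add: emeasure_eq_measure2)
qed

lemma distN_nonneg: "0 \<le> distN w I t"
  unfolding distN_def using dyadic_lattice_len_pos[OF I] by simp

lemma distN_antimono: "antimono (distN w I)"
proof (rule antimonoI)
  fix t t' :: real assume "t \<le> t'"
  then have "emeasure lborel {x\<in>I. w x > t'} \<le> emeasure lborel {x\<in>I. w x > t}"
    using weight_borel_measurable[OF w] dyadic_lattice_sets[OF I]
    by (intro emeasure_mono) auto
  then show "distN w I t' \<le> distN w I t"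
    using distN_nonneg dyadic_lattice_len_pos[OF I]
    by (simp add: emeasure_superlevel_distN ennreal_le_iff)
qed

lemma distN_le_1: "distN w I t \<le> 1"
proof -
  have "emeasure lborel {x\<in>I. w x > t} \<le> emeasure lborel I"
    using dyadic_lattice_sets[OF I] by (intro emeasure_mono) auto
  also have "\<dots> = ennreal (len I)"
    using dyadic_lattice_fmeasurable[OF I] by (simp add: len_def emeasure_eq_measure2)
  finally show ?thesis
    using distN_nonneg dyadic_lattice_len_pos[OF I] by (simp add: emeasure_superlevel_distN ennreal_le_iff)
qed

lemma distN_borel_measurable: "distN w I \<in> borel_measurable borel"
  by (rule borel_measurable_antimono[OF distN_antimono])

lemma borel_measurable_mono_on_comp_distN:
  fixes g :: "real \<Rightarrow> real"
  assumes "mono_on {0..1} g"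
  shows "(\<lambda>t. g (distN w I t)) \<in> borel_measurable borel"
proof (rule borel_measurable_antimono, rule antimonoI)
  fix t t' :: real assume "t \<le> t'"
  then show "g (distN w I t') \<le> g (distN w I t)"
    using distN_antimono distN_nonneg distN_le_1
    by (intro mono_onD[OF assms]) (auto simp: antimono_def)
qed

lemma nn_integral_distN:
  "(\<integral>\<^sup>+ t\<in>{0<..}. ennreal (len I * distN w I t) \<partial>lborel) = ennreal (set_lebesgue_integral lborel I w)"
  using set_integral_weight_layer_cake[OF w I] by (simp add: emeasure_superlevel_distN)

lemma nn_integral_distN_average:
  "(\<integral>\<^sup>+ t\<in>{0<..}. ennreal (distN w I t) \<partial>lborel) = ennreal (set_lebesgue_integral lborel I w / len I)"
proof -
  have len: "0 < len I"
    using dyadic_lattice_len_pos[OF I] .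
  have "(\<integral>\<^sup>+ t\<in>{0<..}. ennreal (distN w I t) \<partial>lborel)
      = (\<integral>\<^sup>+ t. ennreal (1 / len I) * (ennreal (len I * distN w I t) * indicator {0<..} t) \<partial>lborel)"
  proof (intro nn_integral_cong)
    fix t
    have "ennreal (1 / len I) * ennreal (len I * distN w I t) = ennreal (distN w I t)"
      using len by (simp add: ennreal_mult'[symmetric])
    then show "ennreal (distN w I t) * indicator {0<..} t
        = ennreal (1 / len I) * (ennreal (len I * distN w I t) * indicator {0<..} t)"
      by (simp add: mult.assoc[symmetric])
  qed
  also have "\<dots> = ennreal (1 / len I) * ennreal (set_lebesgue_integral lborel I w)"
    using distN_borel_measurable by (simp add: nn_integral_cmult nn_integral_distN)
  also have "\<dots> = ennreal (set_lebesgue_integral lborel I w / len I)"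
    using len set_integral_nonneg[OF weight_nonneg[OF w]] by (simp add: ennreal_mult[symmetric])
  finally show ?thesis .
qed

end

lemma carleson_seq_mono_const:
  assumes "carleson_seq \<alpha> C" "C \<le> C'"
  shows "carleson_seq \<alpha> C'"
  unfolding carleson_seq_def
proof (intro conjI ballI)
  fix J assume J: "J \<in> dyadic_lattice"
  have "(\<Sum>\<^sub>\<infinity> I\<in>{I\<in>dyadic_lattice. I \<subseteq> J}. ennreal (\<alpha> I * len I)) \<le> ennreal (C * len J)"
    using assms(1) J unfolding carleson_seq_def by blast
  also have "\<dots> \<le> ennreal (C' * len J)"
    using assms(2) dyadic_lattice_len_pos[OF J] by (intro ennreal_leI mult_right_mono) auto
  finally show "(\<Sum>\<^sub>\<infinity> I\<in>{I\<in>dyadic_lattice. I \<subseteq> J}. ennreal (\<alpha> I * len I)) \<le> ennreal (C' * len J)" .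
qed (use assms(1) in \<open>auto simp: carleson_seq_def\<close>)

lemma carleson_seq_nonneg: "carleson_seq \<alpha> C \<Longrightarrow> I \<in> dyadic_lattice \<Longrightarrow> 0 \<le> \<alpha> I"
  by (simp add: carleson_seq_def)

lemma carleson_seq_finite_sum:
  assumes "carleson_seq \<alpha> C" "J \<in> dyadic_lattice" "finite G" "G \<subseteq> {I\<in>dyadic_lattice. I \<subseteq> J}"
  shows "(\<Sum>I\<in>G. ennreal (\<alpha> I * len I)) \<le> ennreal (C * len J)"
proof -
  have "(\<Sum>I\<in>G. ennreal (\<alpha> I * len I)) = (\<Sum>\<^sub>\<infinity> I\<in>G. ennreal (\<alpha> I * len I))"
    using assms(3) by simp
  also have "\<dots> \<le> (\<Sum>\<^sub>\<infinity> I\<in>{I\<in>dyadic_lattice. I \<subseteq> J}. ennreal (\<alpha> I * len I))"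
    using assms(4) by (intro infsum_mono_neutral) (auto intro: nonneg_summable_on_complete)
  also have "\<dots> \<le> ennreal (C * len J)"
    using assms(1,2) unfolding carleson_seq_def by blast
  finally show ?thesis .
qed

lemma dyadic_maximal_cover:
  assumes "finite G" "G \<subseteq> dyadic_lattice"
  obtains Q where "Q \<subseteq> G" "pairwise disjnt Q" "\<And>I. I \<in> G \<Longrightarrow> \<exists>Q0\<in>Q. I \<subseteq> Q0"
proof
  let ?Q = "{Q\<in>G. \<forall>Q'\<in>G. Q \<subseteq> Q' \<longrightarrow> Q' = Q}"
  show "?Q \<subseteq> G"
    by blast
  show "pairwise disjnt ?Q"
  proof (rule pairwiseI)
    fix Q1 Q2 assume Q12: "Q1 \<in> ?Q" "Q2 \<in> ?Q" "Q1 \<noteq> Q2"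
    then have "Q1 \<subseteq> Q2 \<or> Q2 \<subseteq> Q1 \<or> Q1 \<inter> Q2 = {}"
      using assms(2) by (intro dyadic_nested_or_disjoint) auto
    then show "disjnt Q1 Q2"
      using Q12 unfolding disjnt_def by blast
  qed
  show "\<exists>Q0\<in>?Q. I \<subseteq> Q0" if "I \<in> G" for I
    using finite_has_maximal2[OF assms(1) that] by blast
qed

lemma carleson_sum_below_dense_interval:
  assumes carleson: "carleson_seq \<alpha> C" and C: "0 \<le> C" and l: "0 < l"
    and Q: "Q \<in> dyadic_lattice" and E: "E \<in> sets lborel" and dense: "l < measure lborel (Q \<inter> E) / len Q"
    and G: "finite G" "G \<subseteq> {I\<in>dyadic_lattice. I \<subseteq> Q}"
  shows "(\<Sum>I\<in>G. ennreal (\<alpha> I * len I)) \<le> ennreal (C / l) * emeasure lborel (Q \<inter> E)"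
proof -
  have "(\<Sum>I\<in>G. ennreal (\<alpha> I * len I)) \<le> ennreal (C * len Q)"
    by (rule carleson_seq_finite_sum[OF carleson Q G])
  also have "C * len Q \<le> C / l * measure lborel (Q \<inter> E)"
    using dense dyadic_lattice_len_pos[OF Q] C l by (simp add: field_simps mult_left_mono)
  also have "ennreal (C / l * measure lborel (Q \<inter> E)) = ennreal (C / l) * emeasure lborel (Q \<inter> E)"
    using fmeasurableI2[OF dyadic_lattice_fmeasurable[OF Q], of "Q \<inter> E"] dyadic_lattice_sets[OF Q] E C l
    by (subst ennreal_mult') (auto simp: emeasure_eq_measure2)
  finally show ?thesis
    by (simp add: ennreal_leI)
qed

text \<open>The stopping-time estimate: the intervals of F in which E has density above l lie below
  the maximal ones, which are disjoint.\<close>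
lemma carleson_superlevel_bound:
  assumes carleson: "carleson_seq \<alpha> C" and C: "0 \<le> C"
    and I: "I \<in> dyadic_lattice" and F: "finite F" "F \<subseteq> {I'\<in>dyadic_lattice. I' \<subseteq> I}"
    and E: "E \<in> sets lborel" and l: "0 < l"
  shows "(\<Sum>I'\<in>{I'\<in>F. l < measure lborel (I' \<inter> E) / len I'}. ennreal (\<alpha> I' * len I'))
    \<le> ennreal (C / l) * emeasure lborel (I \<inter> E)"
proof -
  define G where "G = {I'\<in>F. l < measure lborel (I' \<inter> E) / len I'}"
  have G: "finite G" "G \<subseteq> dyadic_lattice" "\<And>I'. I' \<in> G \<Longrightarrow> I' \<subseteq> I"
    using F by (auto simp: G_def)
  obtain Q where Q: "Q \<subseteq> G" "pairwise disjnt Q" "\<And>I'. I' \<in> G \<Longrightarrow> \<exists>Q0\<in>Q. I' \<subseteq> Q0"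
    using dyadic_maximal_cover[OF G(1,2)] by blast
  have Q_sets: "Q0 \<inter> E \<in> sets lborel" if "Q0 \<in> Q" for Q0
    using that Q(1) G(2) E dyadic_lattice_sets by blast
  define A where "A Q0 = {I'\<in>G. I' \<subseteq> Q0}" for Q0
  have G_cover: "G = (\<Union>Q0\<in>Q. A Q0)"
    using Q(1,3) by (auto simp: A_def)
  have A_disjoint: "A Q1 \<inter> A Q2 = {}" if "Q1 \<in> Q" "Q2 \<in> Q" "Q1 \<noteq> Q2" for Q1 Q2
  proof -
    have "Q1 \<inter> Q2 = {}"
      using Q(2) that by (simp add: pairwise_def disjnt_def)
    then show ?thesis
      unfolding A_def using G(2) dyadic_lattice_nonempty by blast
  qed
  have Q_finite: "finite Q"
    using finite_subset[OF Q(1) G(1)] .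
  have "(\<Sum>I'\<in>G. ennreal (\<alpha> I' * len I')) = (\<Sum>Q0\<in>Q. \<Sum>I'\<in>A Q0. ennreal (\<alpha> I' * len I'))"
    unfolding G_cover using Q_finite G(1) A_disjoint
    by (intro sum.UNION_disjoint) (auto simp: A_def)
  also have "\<dots> \<le> (\<Sum>Q0\<in>Q. ennreal (C / l) * emeasure lborel (Q0 \<inter> E))"
  proof (rule sum_mono)
    fix Q0 assume "Q0 \<in> Q"
    then have "Q0 \<in> dyadic_lattice" "l < measure lborel (Q0 \<inter> E) / len Q0"
      using Q(1) G(2) by (auto simp: G_def)
    then show "(\<Sum>I'\<in>A Q0. ennreal (\<alpha> I' * len I')) \<le> ennreal (C / l) * emeasure lborel (Q0 \<inter> E)"
      using G by (intro carleson_sum_below_dense_interval[OF carleson C l _ E]) (auto simp: A_def)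
  qed
  also have "\<dots> = ennreal (C / l) * emeasure lborel (\<Union>Q0\<in>Q. Q0 \<inter> E)"
  proof -
    have "disjoint_family_on (\<lambda>Q0. Q0 \<inter> E) Q"
      using Q(2) unfolding disjoint_family_on_def pairwise_def disjnt_def by blast
    then show ?thesis
      using Q_sets Q_finite by (simp add: sum_distrib_left[symmetric] sum_emeasure image_subset_iff)
  qed
  also have "\<dots> \<le> ennreal (C / l) * emeasure lborel (I \<inter> E)"
    using Q(1) G(3) E dyadic_lattice_sets[OF I] by (intro mult_left_mono emeasure_mono) auto
  finally show ?thesis
    unfolding G_def .
qed

lemma young_mult_divide:
  fixes c N p :: real
  assumes "0 < p" "0 \<le> N"
  shows "2 * c * N \<le> c^2 * (N * p) + N / p"
proof -
  have "0 \<le> N * (c * p - 1)^2 / p"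
    using assms by simp
  also have "N * (c * p - 1)^2 / p = c^2 * (N * p) + N / p - 2 * c * N"
    using assms(1) by (simp add: field_simps power2_eq_square)
  finally show ?thesis
    by simp
qed

locale admissible_Psi =
  fixes \<Psi> :: "real \<Rightarrow> real"
  assumes Psi_pos: "\<forall>s\<in>{0<..1}. \<Psi> s > 0"
    and Psi_decr: "antimono_on {0<..1} \<Psi>"
    and sPsi_incr: "mono_on {0<..1} (\<lambda>s. s * \<Psi> s)"
begin

lemma Psi_antimono: "0 < s \<Longrightarrow> s \<le> s' \<Longrightarrow> s' \<le> 1 \<Longrightarrow> \<Psi> s' \<le> \<Psi> s"
  using Psi_decr unfolding monotone_on_def by auto

lemma mult_Psi_mono: "0 < s \<Longrightarrow> s \<le> s' \<Longrightarrow> s' \<le> 1 \<Longrightarrow> s * \<Psi> s \<le> s' * \<Psi> s'"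
  using sPsi_incr unfolding monotone_on_def by auto

lemma mono_on_mult_Psi: "mono_on {0..1} (\<lambda>s. s * \<Psi> s)"
proof (rule mono_onI)
  fix s s' :: real assume "s \<in> {0..1}" "s' \<in> {0..1}" "s \<le> s'"
  then show "s * \<Psi> s \<le> s' * \<Psi> s'"
    using mult_Psi_mono[of s s'] Psi_pos by (cases "s = 0"; cases "s' = 0") (auto intro: less_imp_le)
qed

lemma mono_on_divide_Psi: "mono_on {0..1} (\<lambda>s. s / \<Psi> s)"
proof (rule mono_onI)
  fix s s' :: real assume s: "s \<in> {0..1}" "s' \<in> {0..1}" "s \<le> s'"
  show "s / \<Psi> s \<le> s' / \<Psi> s'"
  proof (cases "s = 0")
    case True
    then show ?thesis using s Psi_pos by (cases "s' = 0") (auto intro: less_imp_le)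
  next
    case False
    then have "0 < \<Psi> s'" "\<Psi> s' \<le> \<Psi> s"
      using s Psi_pos Psi_antimono[of s s'] by auto
    then have "s / \<Psi> s \<le> s' / \<Psi> s"
      using s by (intro divide_right_mono) auto
    also have "\<dots> \<le> s' / \<Psi> s'"
      using s \<open>0 < \<Psi> s'\<close> \<open>\<Psi> s' \<le> \<Psi> s\<close> by (intro divide_left_mono) auto
    finally show ?thesis .
  qed
qed

definition recip_Psi :: "real \<Rightarrow> real" where
  "recip_Psi l = (if l \<in> {0<..1} then 1 / \<Psi> l else 0)"

lemma recip_Psi_nonneg: "0 \<le> recip_Psi l"
  using Psi_pos by (auto simp: recip_Psi_def less_imp_le)

lemma recip_Psi_borel_measurable: "recip_Psi \<in> borel_measurable borel"
proof (rule borel_measurable_piecewise_mono[of "{{0<..1}, - {0<..1}}"])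
  show "mono_on c recip_Psi" if "c \<in> {{0<..1}, - {0<..1}}" for c
  proof (cases "c = {0<..1}")
    case True
    show ?thesis
      unfolding True
      by (rule mono_onI) (use Psi_pos Psi_antimono in \<open>auto simp: recip_Psi_def intro!: divide_left_mono\<close>)
  next
    case False
    then show ?thesis
      using that by (auto simp: recip_Psi_def monotone_on_def)
  qed
qed auto

text \<open>Since l \<Psi>(l) \<le> s \<Psi>(s), the integrand is at least 1 / (2 \<Psi>(s)) on [s/2, s).\<close>
lemma divide_Psi_le_integral:
  assumes "0 \<le> s" "s \<le> 1"
  shows "ennreal (s / \<Psi> s) \<le> 4 * (\<integral>\<^sup>+ l. ennreal (recip_Psi l) * indicator {0<..<s} l \<partial>lborel)"
proof (cases "s = 0")
  case True
  then show ?thesis by simp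
next
  case False
  then have s: "0 < s" "0 < \<Psi> s"
    using assms Psi_pos by auto
  have "ennreal (s / \<Psi> s) = 4 * (ennreal (1 / (2 * \<Psi> s)) * ennreal (s / 2))"
    using s by (simp add: ennreal_mult'[symmetric] field_simps ennreal_numeral[symmetric] del: ennreal_numeral)
  also have "ennreal (1 / (2 * \<Psi> s)) * ennreal (s / 2)
      = (\<integral>\<^sup>+ l. ennreal (1 / (2 * \<Psi> s)) * indicator {s/2..<s} l \<partial>lborel)"
    using s by (simp add: nn_integral_cmult_indicator)
  also have "\<dots> \<le> (\<integral>\<^sup>+ l. ennreal (recip_Psi l) * indicator {0<..<s} l \<partial>lborel)"
  proof (intro nn_integral_mono)
    fix l
    show "ennreal (1 / (2 * \<Psi> s)) * indicator {s/2..<s} l \<le> ennreal (recip_Psi l) * indicator {0<..<s} l"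
    proof (cases "l \<in> {s/2..<s}")
      case True
      then have l: "0 < l" "l < s" "s / 2 \<le> l"
        using s by auto
      have "l * \<Psi> l \<le> s * \<Psi> s"
        using mult_Psi_mono[of l s] l assms by simp
      then have "\<Psi> l \<le> s * \<Psi> s / l"
        using l by (simp add: field_simps)
      also have "\<dots> \<le> 2 * \<Psi> s"
        using l s by (simp add: field_simps)
      finally have "\<Psi> l \<le> 2 * \<Psi> s" .
      then have "1 / (2 * \<Psi> s) \<le> recip_Psi l"
        using Psi_pos l assms by (simp add: recip_Psi_def frac_le)
      then show ?thesis
        using True l by (simp add: ennreal_leI)
    qed simp
  qed
  finally show ?thesis
    by (simp add: mult_left_mono)
qed

end

lemma sum_cmult_nn_integral:
  fixes g :: "'i \<Rightarrow> 'a \<Rightarrow> ennreal"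
  assumes "\<And>i. i \<in> F \<Longrightarrow> g i \<in> borel_measurable M"
  shows "(\<Sum>i\<in>F. c i * integral\<^sup>N M (g i)) = (\<integral>\<^sup>+ x. (\<Sum>i\<in>F. c i * g i x) \<partial>M)"
  using assms by (simp add: nn_integral_sum nn_integral_cmult)

context admissible_Psi
begin

lemma carleson_sum_divide_Psi_le:
  assumes carleson: "carleson_seq \<alpha> C" and C: "0 \<le> C"
    and I: "I \<in> dyadic_lattice" and F: "finite F" "F \<subseteq> {I'\<in>dyadic_lattice. I' \<subseteq> I}"
    and E: "E \<in> sets lborel"
  shows "(\<Sum>I'\<in>F. ennreal (\<alpha> I' * len I') *
      ennreal (measure lborel (I' \<inter> E) / len I' / \<Psi> (measure lborel (I' \<inter> E) / len I')))
    \<le> ennreal (4 * C) * (\<integral>\<^sup>+ s\<in>{0<..1}. ennreal (1 / (s * \<Psi> s)) \<partial>lborel) * emeasure lborel (I \<inter> E)"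
proof -
  define N where "N I' = measure lborel (I' \<inter> E) / len I'" for I'
  define c where "c I' = ennreal (\<alpha> I' * len I')" for I'
  define X where "X = emeasure lborel (I \<inter> E)"
  define h where "h I' l = ennreal (recip_Psi l) * indicator {0<..<N I'} l" for I' l
  have N_range: "0 \<le> N I'" "N I' \<le> 1" if "I' \<in> F" for I'
  proof -
    have I': "I' \<in> dyadic_lattice"
      using that F by auto
    have "measure lborel (I' \<inter> E) \<le> measure lborel I'"
      using E dyadic_lattice_sets[OF I'] by (intro measure_mono_fmeasurable dyadic_lattice_fmeasurable[OF I']) auto
    then show "0 \<le> N I'" "N I' \<le> 1"
      unfolding N_def using dyadic_lattice_len_pos[OF I'] by (simp_all add: len_def)
  qed
  have h_measurable: "h I' \<in> borel_measurable lborel" for I'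
    unfolding h_def using recip_Psi_borel_measurable by measurable
  have superlevel: "(\<Sum>I'\<in>F. c I' * h I' l) \<le> ennreal C * X * ennreal (recip_Psi l / l)" for l
  proof (cases "l \<in> {0<..1}")
    case False
    then have "recip_Psi l = 0"
      by (auto simp: recip_Psi_def)
    then show ?thesis
      by (simp add: h_def)
  next
    case True
    have "(\<Sum>I'\<in>F. c I' * h I' l) = (\<Sum>I'\<in>F. ennreal (recip_Psi l) * (if l < N I' then c I' else 0))"
      using True by (intro sum.cong) (auto simp: h_def indicator_def mult.commute)
    also have "\<dots> = ennreal (recip_Psi l) * (\<Sum>I'\<in>{I'\<in>F. l < N I'}. c I')"
      using F(1) by (simp add: sum_distrib_left[symmetric] sum.inter_filter)
    also have "\<dots> \<le> ennreal (recip_Psi l) * (ennreal (C / l) * X)"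
      unfolding c_def N_def X_def using True
      by (intro mult_left_mono carleson_superlevel_bound[OF carleson C I F E]) auto
    also have "\<dots> = ennreal C * X * ennreal (recip_Psi l / l)"
      using True C recip_Psi_nonneg[of l] by (simp add: ennreal_mult[symmetric] mult_ac)
    finally show ?thesis .
  qed
  have "(\<Sum>I'\<in>F. c I' * ennreal (N I' / \<Psi> (N I'))) \<le> (\<Sum>I'\<in>F. c I' * (4 * integral\<^sup>N lborel (h I')))"
    unfolding h_def using N_range by (intro sum_mono mult_left_mono divide_Psi_le_integral) auto
  also have "\<dots> = 4 * (\<integral>\<^sup>+ l. (\<Sum>I'\<in>F. c I' * h I' l) \<partial>lborel)"
    using h_measurable by (simp add: sum_cmult_nn_integral[symmetric] sum_distrib_left mult_ac)
  also have "\<dots> \<le> 4 * (\<integral>\<^sup>+ l. ennreal C * X * ennreal (recip_Psi l / l) \<partial>lborel)"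
    using superlevel by (intro mult_left_mono nn_integral_mono) auto
  also have "\<dots> = 4 * (ennreal C * X * (\<integral>\<^sup>+ l. ennreal (recip_Psi l / l) \<partial>lborel))"
    using recip_Psi_borel_measurable by (simp add: nn_integral_cmult)
  also have "(\<integral>\<^sup>+ l. ennreal (recip_Psi l / l) \<partial>lborel) = (\<integral>\<^sup>+ s\<in>{0<..1}. ennreal (1 / (s * \<Psi> s)) \<partial>lborel)"
    by (intro nn_integral_cong) (simp add: recip_Psi_def mult.commute)
  finally show ?thesis
    unfolding c_def N_def X_def using C by (simp add: ennreal_mult mult_ac)
qed

context
  fixes w :: "real \<Rightarrow> real" and I :: "real set"
  assumes w: "is_weight w" and I: "I \<in> dyadic_lattice"
begin

lemma nn_integral_distN_young:
  assumes "0 \<le> c"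
  shows "ennreal (2 * c) * (\<integral>\<^sup>+ t\<in>{0<..}. ennreal (distN w I t) \<partial>lborel)
    \<le> ennreal (c^2) * nPsi \<Psi> (distN w I) + (\<integral>\<^sup>+ t\<in>{0<..}. ennreal (distN w I t / \<Psi> (distN w I t)) \<partial>lborel)"
proof -
  let ?N = "distN w I"
  have N: "0 \<le> ?N t" "?N t \<le> 1" for t
    using distN_nonneg[OF w I] distN_le_1[OF w I] by auto
  have [measurable]: "?N \<in> borel_measurable borel" "(\<lambda>t. ?N t * \<Psi> (?N t)) \<in> borel_measurable borel"
    "(\<lambda>t. ?N t / \<Psi> (?N t)) \<in> borel_measurable borel"
    using distN_borel_measurable[OF w I] borel_measurable_mono_on_comp_distN[OF w I]
      mono_on_mult_Psi mono_on_divide_Psi by auto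
  have nonneg: "0 \<le> ?N t * \<Psi> (?N t)" "0 \<le> ?N t / \<Psi> (?N t)" for t
    using mono_onD[OF mono_on_mult_Psi, of 0 "?N t"] mono_onD[OF mono_on_divide_Psi, of 0 "?N t"] N[of t]
    by auto
  have pointwise: "ennreal (2 * c) * ennreal (?N t)
      \<le> ennreal (c^2) * ennreal (?N t * \<Psi> (?N t)) + ennreal (?N t / \<Psi> (?N t))" for t
  proof (cases "?N t = 0")
    case False
    then have "0 < \<Psi> (?N t)"
      using N[of t] Psi_pos by auto
    have "ennreal (2 * c) * ennreal (?N t) = ennreal (2 * c * ?N t)"
      using assms N[of t] by (simp add: ennreal_mult)
    also have "\<dots> \<le> ennreal (c^2 * (?N t * \<Psi> (?N t)) + ?N t / \<Psi> (?N t))"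
      using young_mult_divide[OF \<open>0 < \<Psi> (?N t)\<close> N(1)] by (rule ennreal_leI)
    also have "\<dots> = ennreal (c^2) * ennreal (?N t * \<Psi> (?N t)) + ennreal (?N t / \<Psi> (?N t))"
      using nonneg[of t] by (simp add: ennreal_plus ennreal_mult)
    finally show ?thesis .
  qed simp
  have "ennreal (2 * c) * (\<integral>\<^sup>+ t\<in>{0<..}. ennreal (?N t) \<partial>lborel)
      = (\<integral>\<^sup>+ t. ennreal (2 * c) * (ennreal (?N t) * indicator {0<..} t) \<partial>lborel)"
    by (rule nn_integral_cmult[symmetric]) measurable
  also have "\<dots> \<le> (\<integral>\<^sup>+ t. ennreal (c^2) * (ennreal (?N t * \<Psi> (?N t)) * indicator {0<..} t)
      + ennreal (?N t / \<Psi> (?N t)) * indicator {0<..} t \<partial>lborel)"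
    using pointwise by (intro nn_integral_mono) (simp add: indicator_def)
  also have "\<dots> = ennreal (c^2) * (\<integral>\<^sup>+ t\<in>{0<..}. ennreal (?N t * \<Psi> (?N t)) \<partial>lborel)
      + (\<integral>\<^sup>+ t\<in>{0<..}. ennreal (?N t / \<Psi> (?N t)) \<partial>lborel)"
    by (simp add: nn_integral_add nn_integral_cmult)
  also have "(\<integral>\<^sup>+ t\<in>{0<..}. ennreal (?N t * \<Psi> (?N t)) \<partial>lborel) = nPsi \<Psi> ?N"
    unfolding nPsi_def by (intro nn_integral_cong) auto
  finally show ?thesis .
qed

text \<open>Optimising the Young inequality above in c gives (\<integral> N)^2 \<le> n_\<Psi>(N) \<integral> N / \<Psi>(N), and
  \<integral> N is the average of w over I.\<close>
lemma square_set_integral_divide_nPsi_le: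
  assumes fin: "nPsi \<Psi> (distN w I) < \<infinity>"
  shows "ennreal ((set_lebesgue_integral lborel I w)^2 / (len I * enn2real (nPsi \<Psi> (distN w I))))
    \<le> ennreal (len I) * (\<integral>\<^sup>+ t\<in>{0<..}. ennreal (distN w I t / \<Psi> (distN w I t)) \<partial>lborel)"
    (is "ennreal (?\<mu>^2 / (len I * ?n)) \<le> ennreal (len I) * ?m")
proof (cases "?m = \<infinity>")
  case True
  then show ?thesis
    using dyadic_lattice_len_pos[OF I] by (simp add: ennreal_mult_top)
next
  case False
  let ?N = "distN w I"
  define mr where "mr = enn2real ?m"
  have len: "0 < len I"
    using dyadic_lattice_len_pos[OF I] .
  have \<mu>: "0 \<le> ?\<mu>"
    using weight_nonneg[OF w] by (rule set_integral_nonneg)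
  have m: "?m = ennreal mr" "0 \<le> mr"
    using False by (simp_all add: mr_def ennreal_enn2real less_top)
  define nr where "nr = ?n"
  have n: "nPsi \<Psi> ?N = ennreal nr" "0 \<le> nr"
    using fin by (simp_all add: nr_def ennreal_enn2real less_top)
  have A: "(\<integral>\<^sup>+ t\<in>{0<..}. ennreal (?N t) \<partial>lborel) = ennreal (?\<mu> / len I)"
    by (rule nn_integral_distN_average[OF w I])
  have "(?\<mu> / len I)^2 \<le> mr * nr"
  proof (rule square_le_of_quadratic_nonneg)
    fix c :: real
    show "0 \<le> mr - 2 * c * (?\<mu> / len I) + c^2 * nr"
    proof (cases "0 \<le> c")
      case True
      have "ennreal (2 * c * (?\<mu> / len I)) = ennreal (2 * c) * ennreal (?\<mu> / len I)"
        using True \<mu> len by (intro ennreal_mult) auto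
      also have "\<dots> \<le> ennreal (c^2) * nPsi \<Psi> ?N + ?m"
        using nn_integral_distN_young[OF True] unfolding A .
      also have "\<dots> = ennreal (c^2 * nr + mr)"
        using n m by (simp add: ennreal_mult ennreal_plus)
      finally have "ennreal (2 * c * (?\<mu> / len I)) \<le> ennreal (c^2 * nr + mr)" .
      moreover have "0 \<le> c^2 * nr + mr"
        using n m by simp
      ultimately show ?thesis
        using ennreal_le_iff by simp
    next
      case False
      then have "c * (?\<mu> / len I) \<le> 0"
        using \<mu> len by (intro mult_nonpos_nonneg) auto
      then show ?thesis
        using n m by simp
    qed
  qed (use n in simp)
  then have "?\<mu>^2 / (len I * nr) \<le> len I * mr"
    using len n(2) m(2) by (cases "nr = 0") (simp_all add: field_simps power2_eq_square)
  then have "ennreal (?\<mu>^2 / (len I * ?n)) \<le> ennreal (len I * mr)"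
    unfolding nr_def by (rule ennreal_leI)
  also have "\<dots> = ennreal (len I) * ?m"
    using m len by (simp add: ennreal_mult)
  finally show ?thesis .
qed

end

lemma carleson_sum_distN_divide_Psi_le:
  assumes carleson: "carleson_seq \<alpha> C" and C: "0 \<le> C"
    and I: "I \<in> dyadic_lattice" and w: "is_weight w"
    and F: "finite F" "F \<subseteq> {J\<in>dyadic_lattice. J \<subseteq> I}"
  shows "(\<Sum>J\<in>F. ennreal (\<alpha> J * len J) * ennreal (distN w J t / \<Psi> (distN w J t)))
    \<le> ennreal (4 * C) * (\<integral>\<^sup>+ s\<in>{0<..1}. ennreal (1 / (s * \<Psi> s)) \<partial>lborel) * ennreal (len I * distN w I t)"
proof -
  define E where "E = {x. t < w x}"
  have E_sets: "E \<in> sets lborel"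
    unfolding E_def using weight_borel_measurable[OF w] by measurable
  have superlevel: "{x\<in>J. w x > t} = J \<inter> E" for J
    by (auto simp: E_def)
  show ?thesis
    using carleson_sum_divide_Psi_le[OF carleson C I F E_sets] emeasure_superlevel_distN[OF w I, of t]
    unfolding distN_def superlevel by simp
qed

text \<open>The weights \<beta>(I) = \<mu>(I)^2 \<alpha>(I) / (|I| n_\<Psi>(N_I)) form a Carleson sequence with
  respect to the measure w dx: bound each term by the previous lemma, then, for each height t,
  apply the superlevel estimate to E = {w > t} and integrate in t.\<close>
lemma carleson_wrt_weight:
  assumes K: "(\<integral>\<^sup>+ s\<in>{0<..1}. ennreal (1 / (s * \<Psi> s)) \<partial>lborel) < \<infinity>"
    and carleson: "carleson_seq \<alpha> C" and C: "0 \<le> C"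
    and w: "is_weight w" and fin: "\<forall>I\<in>dyadic_lattice. nPsi \<Psi> (distN w I) < \<infinity>"
    and I: "I \<in> dyadic_lattice" and F: "finite F" "F \<subseteq> dyadic_lattice"
  shows "(\<Sum>I'\<in>{I'\<in>F. I' \<subseteq> I}. (set_lebesgue_integral lborel I' w)^2 * \<alpha> I'
      / (len I' * enn2real (nPsi \<Psi> (distN w I'))))
    \<le> 4 * C * enn2real (\<integral>\<^sup>+ s\<in>{0<..1}. ennreal (1 / (s * \<Psi> s)) \<partial>lborel) * set_lebesgue_integral lborel I w"
proof -
  define Kint where "Kint = (\<integral>\<^sup>+ s\<in>{0<..1}. ennreal (1 / (s * \<Psi> s)) \<partial>lborel)"
  define \<mu> where "\<mu> J = set_lebesgue_integral lborel J w" for J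
  define \<beta> where "\<beta> J = (\<mu> J)^2 * \<alpha> J / (len J * enn2real (nPsi \<Psi> (distN w J)))" for J
  define c where "c J = ennreal (\<alpha> J * len J)" for J
  define \<phi> where "\<phi> J t = ennreal (distN w J t / \<Psi> (distN w J t)) * indicator {0<..} t" for J t
  define Fs where "Fs = {I'\<in>F. I' \<subseteq> I}"
  have Fs: "finite Fs" "Fs \<subseteq> {I'\<in>dyadic_lattice. I' \<subseteq> I}"
    using F by (auto simp: Fs_def)
  have \<mu>_nonneg: "0 \<le> \<mu> J" for J
    unfolding \<mu>_def using weight_nonneg[OF w] by (rule set_integral_nonneg)
  have \<phi>_measurable: "\<phi> J \<in> borel_measurable lborel" if "J \<in> dyadic_lattice" for J
    using borel_measurable_mono_on_comp_distN[OF w that mono_on_divide_Psi]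
    unfolding \<phi>_def by measurable
  have \<beta>_nonneg: "0 \<le> \<beta> J" if "J \<in> Fs" for J
  proof -
    have "J \<in> dyadic_lattice"
      using that Fs by auto
    then show ?thesis
      using carleson_seq_nonneg[OF carleson] dyadic_lattice_len_pos unfolding \<beta>_def
      by (intro divide_nonneg_nonneg mult_nonneg_nonneg) (auto intro: less_imp_le)
  qed
  have "ennreal (\<Sum>J\<in>Fs. \<beta> J) = (\<Sum>J\<in>Fs. ennreal (\<beta> J))"
    using \<beta>_nonneg by (intro sum_ennreal[symmetric])
  also have "\<dots> \<le> (\<Sum>J\<in>Fs. c J * integral\<^sup>N lborel (\<phi> J))"
  proof (rule sum_mono)
    fix J assume "J \<in> Fs"
    then have J: "J \<in> dyadic_lattice"
      using Fs by auto
    have "\<beta> J = \<alpha> J * ((\<mu> J)^2 / (len J * enn2real (nPsi \<Psi> (distN w J))))"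
      by (simp add: \<beta>_def)
    then have "ennreal (\<beta> J) = ennreal (\<alpha> J) * ennreal ((\<mu> J)^2 / (len J * enn2real (nPsi \<Psi> (distN w J))))"
      using carleson_seq_nonneg[OF carleson J] by (simp only: ennreal_mult')
    also have "\<dots> \<le> ennreal (\<alpha> J) * (ennreal (len J) * integral\<^sup>N lborel (\<phi> J))"
      using square_set_integral_divide_nPsi_le[OF w J] fin J unfolding \<mu>_def \<phi>_def
      by (intro mult_left_mono) auto
    also have "\<dots> = c J * integral\<^sup>N lborel (\<phi> J)"
      using carleson_seq_nonneg[OF carleson J] dyadic_lattice_len_pos[OF J]
      by (simp add: c_def ennreal_mult mult.assoc)
    finally show "ennreal (\<beta> J) \<le> c J * integral\<^sup>N lborel (\<phi> J)" .
  qed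
  also have "\<dots> = (\<integral>\<^sup>+ t. (\<Sum>J\<in>Fs. c J * \<phi> J t) \<partial>lborel)"
    using Fs \<phi>_measurable by (intro sum_cmult_nn_integral) auto
  also have "\<dots> \<le> (\<integral>\<^sup>+ t. ennreal (4 * C) * Kint * (ennreal (len I * distN w I t) * indicator {0<..} t) \<partial>lborel)"
    using carleson_sum_distN_divide_Psi_le[OF carleson C I w Fs]
    by (intro nn_integral_mono) (simp add: \<phi>_def c_def Kint_def mult.assoc[symmetric]
        sum_distrib_right[symmetric] mult_right_mono)
  also have "\<dots> = ennreal (4 * C) * Kint * ennreal (\<mu> I)"
    using distN_borel_measurable[OF w I]
    by (simp add: nn_integral_cmult nn_integral_distN[OF w I] \<mu>_def)
  also have "\<dots> = ennreal (4 * C * enn2real Kint * \<mu> I)"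
    using C K \<mu>_nonneg[of I] by (simp add: Kint_def ennreal_mult ennreal_enn2real less_top)
  finally show ?thesis
    using C \<mu>_nonneg[of I] unfolding Fs_def \<beta>_def \<mu>_def Kint_def
    by (simp add: ennreal_le_iff)
qed

end

context admissible_Psi
begin

lemma weighted_Psi_embedding_finite:
  assumes K: "(\<integral>\<^sup>+ s\<in>{0<..1}. ennreal (1 / (s * \<Psi> s)) \<partial>lborel) < \<infinity>"
    and carleson: "carleson_seq \<alpha> C" and C: "0 \<le> C"
    and w: "is_weight w" and fin: "\<forall>I\<in>dyadic_lattice. nPsi \<Psi> (distN w I) < \<infinity>" and f: "in_L2w w f"
    and J: "J \<in> dyadic_lattice" and F: "finite F" "F \<subseteq> {I\<in>dyadic_lattice. I \<subseteq> J}"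
  defines "B \<equiv> max 1 (4 * C * enn2real (\<integral>\<^sup>+ s\<in>{0<..1}. ennreal (1 / (s * \<Psi> s)) \<partial>lborel))"
  shows "(\<Sum>I\<in>F. (avg (\<lambda>x. f x * w x) I)^2 * \<alpha> I * len I / enn2real (nPsi \<Psi> (distN w I)))
    \<le> 4 * B * set_lebesgue_integral lborel J (\<lambda>x. (f x)^2 * w x)"
proof -
  define \<mu> where "\<mu> I = set_lebesgue_integral lborel I w" for I
  define a where "a I = set_lebesgue_integral lborel I (\<lambda>x. f x * w x)" for I
  define \<beta> where "\<beta> I = (\<mu> I)^2 * \<alpha> I / (len I * enn2real (nPsi \<Psi> (distN w I))) / B" for I
  have B: "1 \<le> B" "4 * C * enn2real (\<integral>\<^sup>+ s\<in>{0<..1}. ennreal (1 / (s * \<Psi> s)) \<partial>lborel) \<le> B"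
    by (simp_all add: B_def)
  have F_lattice: "F \<subseteq> dyadic_lattice"
    using F by auto
  have term_eq: "(avg (\<lambda>x. f x * w x) I)^2 * \<alpha> I * len I / enn2real (nPsi \<Psi> (distN w I))
      = B * (\<beta> I * (a I / \<mu> I)^2)" if "I \<in> dyadic_lattice" for I
  proof (cases "\<mu> I = 0")
    case True
    then have "a I = 0"
      using weighted_cauchy_schwarz[OF w f that] by (simp add: a_def \<mu>_def)
    then show ?thesis
      by (simp add: avg_def a_def)
  next
    case False
    then show ?thesis
      using dyadic_lattice_len_pos[OF that] B(1)
      by (simp add: \<beta>_def avg_def a_def power2_eq_square field_simps)
  qed
  have \<beta>_nonneg: "0 \<le> \<beta> I" if "I \<in> F" for I
    using that F_lattice carleson_seq_nonneg[OF carleson] dyadic_lattice_len_pos B(1)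
    unfolding \<beta>_def by (intro divide_nonneg_nonneg mult_nonneg_nonneg) (auto intro: less_imp_le)
  have \<beta>_carleson: "(\<Sum>I'\<in>{I'\<in>F. I' \<subseteq> I}. \<beta> I') \<le> \<mu> I" if "I \<in> dyadic_lattice" for I
  proof -
    have "(\<Sum>I'\<in>{I'\<in>F. I' \<subseteq> I}. \<beta> I' * B) \<le> B * \<mu> I"
      using carleson_wrt_weight[OF K carleson C w fin that F(1) F_lattice] B(1)
        mult_right_mono[OF B(2), of "\<mu> I"] set_integral_nonneg[OF weight_nonneg[OF w], of I]
      by (simp add: \<beta>_def \<mu>_def)
    then have "B * (\<Sum>I'\<in>{I'\<in>F. I' \<subseteq> I}. \<beta> I') \<le> B * \<mu> I"
      by (simp add: sum_distrib_left mult.commute)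
    moreover have "0 < B"
      using B(1) by simp
    ultimately show ?thesis
      by simp
  qed
  have "(\<Sum>I\<in>{I\<in>F. I \<subseteq> J}. \<beta> I * (a I / \<mu> I)^2) \<le> 4 * set_lebesgue_integral lborel J (\<lambda>x. (f x)^2 * w x)"
    using weighted_carleson_embedding[OF w f F(1) F_lattice \<beta>_nonneg \<beta>_carleson[unfolded \<mu>_def] J]
    unfolding a_def \<mu>_def .
  also have "{I\<in>F. I \<subseteq> J} = F"
    using F by auto
  finally show ?thesis
    using F_lattice B(1) term_eq
    by (simp add: sum_distrib_left[symmetric] subset_iff mult.assoc)
qed

lemma weighted_Psi_embedding:
  assumes K: "(\<integral>\<^sup>+ s\<in>{0<..1}. ennreal (1 / (s * \<Psi> s)) \<partial>lborel) < \<infinity>"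
    and carleson: "carleson_seq \<alpha> C" and C: "0 \<le> C"
    and w: "is_weight w" and fin: "\<forall>I\<in>dyadic_lattice. nPsi \<Psi> (distN w I) < \<infinity>" and f: "in_L2w w f"
    and J: "J \<in> dyadic_lattice" and A: "A \<subseteq> {I \<in> dyadic_lattice. I \<subseteq> J}"
  defines "B \<equiv> max 1 (4 * C * enn2real (\<integral>\<^sup>+ s\<in>{0<..1}. ennreal (1 / (s * \<Psi> s)) \<partial>lborel))"
  shows "(\<Sum>\<^sub>\<infinity> I \<in> A. ennreal ((avg (\<lambda>x. f x * w x) I)\<^sup>2 * \<alpha> I * len I / enn2real (nPsi \<Psi> (distN w I))))
    \<le> ennreal (4 * B) * (\<integral>\<^sup>+ x \<in> J. ennreal ((f x)\<^sup>2 * w x) \<partial>lborel)"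
proof (rule infsum_le_finite_sums)
  fix F assume F: "finite F" "F \<subseteq> A"
  have "0 \<le> (avg (\<lambda>x. f x * w x) I)\<^sup>2 * \<alpha> I * len I / enn2real (nPsi \<Psi> (distN w I))" if "I \<in> F" for I
  proof -
    have "I \<in> dyadic_lattice"
      using that F A by auto
    then show ?thesis
      using carleson_seq_nonneg[OF carleson] dyadic_lattice_len_pos
      by (intro divide_nonneg_nonneg mult_nonneg_nonneg) (auto intro: less_imp_le)
  qed
  then have "(\<Sum>I\<in>F. ennreal ((avg (\<lambda>x. f x * w x) I)\<^sup>2 * \<alpha> I * len I / enn2real (nPsi \<Psi> (distN w I))))
      = ennreal (\<Sum>I\<in>F. (avg (\<lambda>x. f x * w x) I)\<^sup>2 * \<alpha> I * len I / enn2real (nPsi \<Psi> (distN w I)))"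
    by (rule sum_ennreal)
  also have "\<dots> \<le> ennreal (4 * B * set_lebesgue_integral lborel J (\<lambda>x. (f x)^2 * w x))"
    using F A unfolding B_def by (intro ennreal_leI weighted_Psi_embedding_finite[OF K carleson C w fin f J]) auto
  also have "\<dots> = ennreal (4 * B) * ennreal (set_lebesgue_integral lborel J (\<lambda>x. (f x)^2 * w x))"
    using weight_nonneg[OF w] by (intro ennreal_mult set_integral_nonneg) (auto simp: B_def)
  also have "ennreal (set_lebesgue_integral lborel J (\<lambda>x. (f x)^2 * w x))
      = (\<integral>\<^sup>+ x \<in> J. ennreal ((f x)\<^sup>2 * w x) \<partial>lborel)"
    using integrable_L2w[OF w f] weight_nonneg[OF w] dyadic_lattice_sets[OF J]
    by (intro nn_set_integral_eq_set_integral[symmetric]) auto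
  finally show "(\<Sum>I\<in>F. ennreal ((avg (\<lambda>x. f x * w x) I)\<^sup>2 * \<alpha> I * len I / enn2real (nPsi \<Psi> (distN w I))))
    \<le> ennreal (4 * B) * (\<integral>\<^sup>+ x \<in> J. ennreal ((f x)\<^sup>2 * w x) \<partial>lborel)" .
qed (rule nonneg_summable_on_complete, simp)

end

theorem theorem2p5:
  fixes \<Psi> :: "real \<Rightarrow> real" and C0 :: real
  assumes Psi_pos: "\<forall>s\<in>{0<..1}. \<Psi> s > 0"
    and Psi_decr: "antimono_on {0<..1} \<Psi>"
    and sPsi_incr: "mono_on {0<..1} (\<lambda>s. s * \<Psi> s)"
    and Psi_int: "(\<integral>\<^sup>+ s \<in> {0<..1}. ennreal (1 / (s * \<Psi> s)) \<partial>lborel) < \<infinity>"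
  shows "\<exists>C::real. \<forall>\<alpha> w J f.
     carleson_seq \<alpha> C0 \<longrightarrow> is_weight w \<longrightarrow>
     (\<forall>I\<in>dyadic_lattice. nPsi \<Psi> (distN w I) < \<infinity>) \<longrightarrow>
     J \<in> dyadic_lattice \<longrightarrow> in_L2w w f \<longrightarrow>
     (\<Sum>\<^sub>\<infinity> I \<in> {I \<in> dyadic_lattice. I \<subseteq> J \<and> \<not> (AE x in lborel. x \<in> I \<longrightarrow> w x = 0)}.
        ennreal ((avg (\<lambda>x. f x * w x) I)\<^sup>2 * \<alpha> I * len I / enn2real (nPsi \<Psi> (distN w I))))
     \<le> ennreal C * (\<integral>\<^sup>+ x \<in> J. ennreal ((f x)\<^sup>2 * w x) \<partial>lborel)"
proof -
  interpret admissible_Psi \<Psi>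
    using Psi_pos Psi_decr sPsi_incr by unfold_locales
  define C where "C = max C0 0"
  show ?thesis
  proof (intro exI allI impI)
    fix \<alpha> w J f
    assume "carleson_seq \<alpha> C0" "is_weight w" "\<forall>I\<in>dyadic_lattice. nPsi \<Psi> (distN w I) < \<infinity>"
      "J \<in> dyadic_lattice" "in_L2w w f"
    moreover have "carleson_seq \<alpha> C"
      using \<open>carleson_seq \<alpha> C0\<close> by (rule carleson_seq_mono_const) (simp add: C_def)
    ultimately show "(\<Sum>\<^sub>\<infinity> I \<in> {I \<in> dyadic_lattice. I \<subseteq> J \<and> \<not> (AE x in lborel. x \<in> I \<longrightarrow> w x = 0)}.
        ennreal ((avg (\<lambda>x. f x * w x) I)\<^sup>2 * \<alpha> I * len I / enn2real (nPsi \<Psi> (distN w I))))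
      \<le> ennreal (4 * max 1 (4 * C * enn2real (\<integral>\<^sup>+ s\<in>{0<..1}. ennreal (1 / (s * \<Psi> s)) \<partial>lborel)))
        * (\<integral>\<^sup>+ x \<in> J. ennreal ((f x)\<^sup>2 * w x) \<partial>lborel)"
      using Psi_int by (intro weighted_Psi_embedding) (auto simp: C_def)
  qed
qed

end
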